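(* Let $r_0\ge 1$. Suppose that for every $\epsilon>0$ there is a constant $c(\epsilon)$ such that for every finite field $F$ of odd characteristic in which $-1$ is not a square and every $g:F^3\to\mathbb{C}$ with $g\sim 1$ on its support, $$\|\widehat{g}\|_{L^2(P,d\sigma)} \le c(\epsilon)\,|F|^{\epsilon}\,\|g\|_{L^{r_0}(F^3)}.$$ Then for every $1\le r<r_0$ there is a constant $C_r$ such that for every such field $F$ and every $g:F^3\to\mathbb{C}$ (arbitrary), $$\|\widehat{g}\|_{L^2(P,d\sigma)} \le C_r\,\|g\|_{L^{r}(F^3)}.$$
   Context: $F$ is a finite field of odd characteristic, $e:(F,+)\to\mathbb{C}^\times$ a fixed nontrivial additive character, $x\cdot y=\sum_i x_iy_i$ on $F^d$. $P=\{(\underline{x},\underline{x}\cdot\underline{x}):\underline{x}\in F^2\}\subseteq F^3$. For $g:F^3\to\mathbb{C}$, $\widehat{g}(\xi)=\sum_{x\in F^3}g(x)e(-x\cdot\xi)$ and $\|\widehat{g}\|_{L^2(P,d\sigma)}=\big(|F|^{-2}\sum_{\xi\in P}|\widehat{g}(\xi)|^2\big)^{1/2}$. $\|g\|_{L^{r}(F^3)}=\big(\sum_{x\in F^3}|g(x)|^{r}\big)^{1/r}$. "$g\sim 1$ on its support $G$" means $G=\{x:g(x)\neq 0\}$ and $\tfrac12\le|g(x)|\le 2$ for all $x\in G$. The constants $c(\epsilon)$, $C_r$ are independent of $F$ and $g$. *)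

theory Defs
  imports "HOL-Analysis.Analysis" "HOL-Algebra.Ring" "HOL-Algebra.QuotRing"
begin

text \<open>Finite fields are represented as HOL-Algebra field structures whose carrier
is a (finite) set of natural numbers; every finite field is isomorphic to one.\<close>

definition odd_char_field_no_sqrt_m1 :: "nat ring \<Rightarrow> bool" where
  "odd_char_field_no_sqrt_m1 R \<longleftrightarrow>
     field R \<and> finite (carrier R) \<and> \<one>\<^bsub>R\<^esub> \<oplus>\<^bsub>R\<^esub> \<one>\<^bsub>R\<^esub> \<noteq> \<zero>\<^bsub>R\<^esub> \<and>
     \<not> (\<exists>x\<in>carrier R. x \<otimes>\<^bsub>R\<^esub> x = \<ominus>\<^bsub>R\<^esub> \<one>\<^bsub>R\<^esub>)"

definition nontriv_add_char :: "nat ring \<Rightarrow> (nat \<Rightarrow> complex) \<Rightarrow> bool" where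
  "nontriv_add_char R e \<longleftrightarrow>
     (\<forall>a\<in>carrier R. \<forall>b\<in>carrier R. e (a \<oplus>\<^bsub>R\<^esub> b) = e a * e b) \<and>
     (\<exists>a\<in>carrier R. e a \<noteq> 1)"

definition cube :: "nat ring \<Rightarrow> (nat \<times> nat \<times> nat) set" where
  "cube R = carrier R \<times> carrier R \<times> carrier R"

definition dot3 :: "nat ring \<Rightarrow> nat \<times> nat \<times> nat \<Rightarrow> nat \<times> nat \<times> nat \<Rightarrow> nat" where
  "dot3 R x y = (case x of (x1, x2, x3) \<Rightarrow> case y of (y1, y2, y3) \<Rightarrow>
      (x1 \<otimes>\<^bsub>R\<^esub> y1) \<oplus>\<^bsub>R\<^esub> (x2 \<otimes>\<^bsub>R\<^esub> y2) \<oplus>\<^bsub>R\<^esub> (x3 \<otimes>\<^bsub>R\<^esub> y3))"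

definition parab :: "nat ring \<Rightarrow> (nat \<times> nat \<times> nat) set" where
  "parab R = {(x1, x2, (x1 \<otimes>\<^bsub>R\<^esub> x1) \<oplus>\<^bsub>R\<^esub> (x2 \<otimes>\<^bsub>R\<^esub> x2)) | x1 x2.
                x1 \<in> carrier R \<and> x2 \<in> carrier R}"

definition fourier :: "nat ring \<Rightarrow> (nat \<Rightarrow> complex) \<Rightarrow> (nat \<times> nat \<times> nat \<Rightarrow> complex)
                        \<Rightarrow> nat \<times> nat \<times> nat \<Rightarrow> complex" where
  "fourier R e g \<xi> = (\<Sum>x\<in>cube R. g x * e (\<ominus>\<^bsub>R\<^esub> dot3 R x \<xi>))"

definition L2P_norm :: "nat ring \<Rightarrow> (nat \<Rightarrow> complex) \<Rightarrow> (nat \<times> nat \<times> nat \<Rightarrow> complex) \<Rightarrow> real" where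
  "L2P_norm R e g = sqrt (
      (1 / (real (card (carrier R)))\<^sup>2) * (\<Sum>\<xi>\<in>parab R. (cmod (fourier R e g \<xi>))\<^sup>2))"

definition Lr_norm :: "nat ring \<Rightarrow> real \<Rightarrow> (nat \<times> nat \<times> nat \<Rightarrow> complex) \<Rightarrow> real" where
  "Lr_norm R r g = (\<Sum>x\<in>cube R. cmod (g x) powr r) powr (1 / r)"

definition sim_one :: "nat ring \<Rightarrow> (nat \<times> nat \<times> nat \<Rightarrow> complex) \<Rightarrow> bool" where
  "sim_one R g \<longleftrightarrow> (\<forall>x\<in>cube R. g x \<noteq> 0 \<longrightarrow> 1/2 \<le> cmod (g x) \<and> cmod (g x) \<le> 2)"

end

theory Submission
  imports Defs "HOL-Algebra.Multiplicative_Group"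
begin

text \<open>Expanding the square of \<open>L2P_norm\<close> over the paraboloid produces the Fourier transform of
the paraboloid, a product of two one-variable Gauss sums; it has modulus at most \<open>|F|\<close> away from
the origin, whence \<open>L2P_norm g\<^sup>2 \<le> \<Parallel>g\<Parallel>\<^sub>2\<^sup>2 + \<Parallel>g\<Parallel>\<^sub>1\<^sup>2 / |F|\<close>. For \<open>g\<close> of size about \<open>1\<close> on a set of \<open>M\<close> points
this gives \<open>L2P_norm g \<lesssim> M powr (1/2)\<close> when \<open>M \<le> |F|\<close>, while for \<open>M > |F|\<close> the loss \<open>|F| powr \<epsilon>\<close> of the
hypothesis is absorbed into \<open>M powr \<epsilon>\<close>; with \<open>\<epsilon> = 1/r\<^sub>1 - 1/r\<^sub>0\<close> this is a restricted-type bound of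
exponent \<open>r\<^sub>1 \<le> 2\<close>. Splitting an arbitrary \<open>g\<close> into dyadic level sets and summing a geometric series
yields the strong-type bound for every \<open>r < r\<^sub>1\<close>. When \<open>r\<^sub>0 > 3/2\<close> such an \<open>r\<^sub>1\<close> need not exist, but
then the hypothesis applied to the indicator of \<open>F\<^sup>3\<close> bounds \<open>|F|\<close> uniformly, and a trivial
estimate suffices.\<close>

lemma L2_set_sum_le:
  assumes "finite J" "\<And>j x. 0 \<le> f j x"
  shows "L2_set (\<lambda>x. \<Sum>j\<in>J. f j x) A \<le> (\<Sum>j\<in>J. L2_set (f j) A)"
  using assms(1)
proof (induction J rule: finite_induct)
  case empty thus ?case by (simp add: L2_set_def)
next
  case (insert j J)
  have "L2_set (\<lambda>x. \<Sum>j\<in>insert j J. f j x) A = L2_set (\<lambda>x. f j x + (\<Sum>j\<in>J. f j x)) A"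
    using insert by simp
  also have "\<dots> \<le> L2_set (f j) A + L2_set (\<lambda>x. \<Sum>j\<in>J. f j x) A"
    by (rule L2_set_triangle_ineq)
  also have "\<dots> \<le> L2_set (f j) A + (\<Sum>j\<in>J. L2_set (f j) A)" using insert by simp
  finally show ?case using insert by simp
qed

lemma finite_cube: "finite (carrier R) \<Longrightarrow> finite (cube R)"
  unfolding cube_def by simp

lemma card_cube: "card (cube R) = card (carrier R) ^ 3"
  unfolding cube_def by (simp add: card_cartesian_product power3_eq_cube)

lemma L2P_norm_eq_L2_set:
  "L2P_norm R e g = L2_set (\<lambda>\<xi>. cmod (fourier R e g \<xi>)) (parab R) / real (card (carrier R))"
  unfolding L2P_norm_def L2_set_def by (simp add: real_sqrt_mult real_sqrt_divide)

lemma L2P_norm_nonneg: "0 \<le> L2P_norm R e g"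
  unfolding L2P_norm_def by (simp add: sum_nonneg)

lemma L2P_norm_cong: "(\<And>x. x \<in> cube R \<Longrightarrow> g x = g' x) \<Longrightarrow> L2P_norm R e g = L2P_norm R e g'"
  unfolding L2P_norm_def fourier_def by (simp cong: sum.cong)

lemma L2P_norm_eq_0: "(\<And>x. x \<in> cube R \<Longrightarrow> g x = 0) \<Longrightarrow> L2P_norm R e g = 0"
  unfolding L2P_norm_def fourier_def by simp

lemma fourier_sum:
  "fourier R e (\<lambda>x. \<Sum>j\<in>J. c j * h j x) \<xi> = (\<Sum>j\<in>J. c j * fourier R e (h j) \<xi>)"
  unfolding fourier_def
  by (simp add: sum_distrib_right sum_distrib_left mult.assoc) (rule sum.swap)

lemma L2P_norm_sum_le:
  assumes "finite J"
  shows "L2P_norm R e (\<lambda>x. \<Sum>j\<in>J. c j * h j x) \<le> (\<Sum>j\<in>J. cmod (c j) * L2P_norm R e (h j))"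
proof -
  have "L2_set (\<lambda>\<xi>. cmod (fourier R e (\<lambda>x. \<Sum>j\<in>J. c j * h j x) \<xi>)) (parab R)
      \<le> L2_set (\<lambda>\<xi>. \<Sum>j\<in>J. cmod (c j) * cmod (fourier R e (h j) \<xi>)) (parab R)"
    unfolding fourier_sum
    by (intro L2_set_mono) (auto intro!: order_trans[OF norm_sum] simp: norm_mult)
  also have "\<dots> \<le> (\<Sum>j\<in>J. L2_set (\<lambda>\<xi>. cmod (c j) * cmod (fourier R e (h j) \<xi>)) (parab R))"
    by (rule L2_set_sum_le[OF assms]) simp
  also have "\<dots> = (\<Sum>j\<in>J. cmod (c j) * L2_set (\<lambda>\<xi>. cmod (fourier R e (h j) \<xi>)) (parab R))"
    by (simp add: L2_set_right_distrib)
  finally show ?thesis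
    unfolding L2P_norm_eq_L2_set using divide_right_mono by (fastforce simp: sum_divide_distrib)
qed

lemma Lr_norm_nonneg: "0 \<le> Lr_norm R r g"
  unfolding Lr_norm_def by simp

lemma Lr_norm_powr: "0 < r \<Longrightarrow> Lr_norm R r g powr r = (\<Sum>x\<in>cube R. cmod (g x) powr r)"
  unfolding Lr_norm_def by (simp add: powr_powr sum_nonneg)

lemma norm_le_Lr_norm:
  assumes "0 < r" "finite (carrier R)" "x \<in> cube R"
  shows "cmod (g x) \<le> Lr_norm R r g"
proof -
  have "cmod (g x) powr r \<le> (\<Sum>x\<in>cube R. cmod (g x) powr r)"
    using assms by (intro member_le_sum) (auto simp: finite_cube)
  hence "(cmod (g x) powr r) powr (1/r) \<le> (\<Sum>x\<in>cube R. cmod (g x) powr r) powr (1/r)"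
    using assms by (intro powr_mono2) auto
  thus ?thesis unfolding Lr_norm_def using assms by (simp add: powr_powr)
qed

lemma card_superlevel_le:
  assumes "0 < r" "0 < t" "finite (carrier R)"
  shows "real (card {x\<in>cube R. t < cmod (g x)}) \<le> (Lr_norm R r g / t) powr r"
proof -
  let ?G = "{x\<in>cube R. t < cmod (g x)}"
  have "real (card ?G) * t powr r = (\<Sum>x\<in>?G. t powr r)" by simp
  also have "\<dots> \<le> (\<Sum>x\<in>?G. cmod (g x) powr r)"
    using assms by (intro sum_mono powr_mono2) auto
  also have "\<dots> \<le> (\<Sum>x\<in>cube R. cmod (g x) powr r)"
    using assms by (intro sum_mono2) (auto simp: finite_cube)
  also have "\<dots> = Lr_norm R r g powr r" using Lr_norm_powr[OF assms(1)] by simp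
  finally show ?thesis
    using assms by (simp add: powr_divide Lr_norm_nonneg field_simps)
qed

lemma sim_one_norm_le: "sim_one R g \<Longrightarrow> x \<in> cube R \<Longrightarrow> cmod (g x) \<le> 2"
  unfolding sim_one_def by (cases "g x = 0") auto

lemma sim_one_sum_powr_le:
  assumes "sim_one R g" "finite (carrier R)" "0 < p"
  shows "(\<Sum>x\<in>cube R. cmod (g x) powr p) \<le> 2 powr p * real (card {x\<in>cube R. g x \<noteq> 0})"
proof -
  have "(\<Sum>x\<in>cube R. cmod (g x) powr p) \<le> (\<Sum>x\<in>cube R. if g x \<noteq> 0 then 2 powr p else 0)"
    using assms sim_one_norm_le by (intro sum_mono) (auto intro: powr_mono2)
  also have "\<dots> = 2 powr p * real (card {x\<in>cube R. g x \<noteq> 0})"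
    using assms by (simp add: sum.inter_filter[symmetric] finite_cube)
  finally show ?thesis .
qed

lemma Lr_norm_sim_one_le:
  assumes "sim_one R h" "finite (carrier R)" "0 < p"
  shows "Lr_norm R p h \<le> 2 * real (card {x\<in>cube R. h x \<noteq> 0}) powr (1/p)"
proof -
  have "Lr_norm R p h \<le> (2 powr p * real (card {x\<in>cube R. h x \<noteq> 0})) powr (1/p)"
    unfolding Lr_norm_def using sim_one_sum_powr_le[OF assms] assms(3)
    by (intro powr_mono2) (auto simp: sum_nonneg)
  also have "\<dots> = 2 * real (card {x\<in>cube R. h x \<noteq> 0}) powr (1/p)"
    using assms(3) by (simp add: powr_mult powr_powr)
  finally show ?thesis .
qed

lemma sim_one_indicator: "sim_one R (indicator (cube R))"
  unfolding sim_one_def by simp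

lemma Lr_norm_indicator:
  "0 < r \<Longrightarrow> Lr_norm R r (indicator (cube R)) = real (card (carrier R)) powr (3/r)"
proof -
  have "(\<Sum>x\<in>cube R. cmod (indicator (cube R) x :: complex) powr r) = real (card (carrier R)) powr 3"
    by (simp add: card_cube)
  thus ?thesis unfolding Lr_norm_def by (simp only: powr_powr) simp
qed

section \<open>Dyadic decomposition\<close>

lemma dyadic_level_exists:
  fixes A t :: real
  assumes "0 < t" "t \<le> A"
  shows "A / 2 ^ Suc (LEAST n. A / 2 ^ Suc n < t) < t \<and> t \<le> A / 2 ^ (LEAST n. A / 2 ^ Suc n < t)"
    (is "?P (LEAST n. ?Q n)")
proof -
  obtain m where m: "(1/2::real) ^ m < t / A"
    using real_arch_pow_inv[of "t / A" "1/2"] assms by auto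
  have "A / 2 ^ Suc m \<le> A * (1/2) ^ m"
    using assms by (simp add: power_one_over divide_left_mono)
  also have "\<dots> < t" using m assms by (simp add: field_simps)
  finally have "?Q m" .
  hence below: "?Q (LEAST n. ?Q n)" by (rule LeastI)
  have "t \<le> A / 2 ^ (LEAST n. ?Q n)"
  proof (cases "LEAST n. ?Q n")
    case (Suc k)
    hence "\<not> ?Q k" using not_less_Least[of k ?Q] by simp
    thus ?thesis using Suc by simp
  qed (use assms in simp)
  with below show ?thesis by simp
qed

lemma dyadic_decomposition:
  fixes g :: "'a \<Rightarrow> complex"
  assumes "finite X" "0 < A" "\<And>x. x \<in> X \<Longrightarrow> cmod (g x) \<le> A"
  obtains J h where "finite J"
    "\<And>j x. x \<in> X \<Longrightarrow> h j x \<noteq> 0 \<Longrightarrow> 1/2 \<le> cmod (h j x) \<and> cmod (h j x) \<le> 1 \<and> A / 2 ^ Suc j < cmod (g x)"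
    "\<And>x. x \<in> X \<Longrightarrow> g x = (\<Sum>j\<in>J. of_real (A / 2 ^ j) * h j x)"
proof
  define lev where "lev x = (LEAST n. A / 2 ^ Suc n < cmod (g x))" for x
  have lev: "A / 2 ^ Suc (lev x) < cmod (g x) \<and> cmod (g x) \<le> A / 2 ^ lev x"
    if "x \<in> X" "g x \<noteq> 0" for x
    unfolding lev_def using dyadic_level_exists that assms(3) by simp
  define h where "h j x = (if x \<in> X \<and> g x \<noteq> 0 \<and> lev x = j then g x * of_real (2 ^ j / A) else 0)"
    for j x
  show "finite (lev ` {x\<in>X. g x \<noteq> 0})" using assms(1) by simp
  show "1/2 \<le> cmod (h j x) \<and> cmod (h j x) \<le> 1 \<and> A / 2 ^ Suc j < cmod (g x)"
    if "x \<in> X" "h j x \<noteq> 0" for j x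
  proof -
    have x: "g x \<noteq> 0" "lev x = j" using that unfolding h_def by (auto split: if_splits)
    have hx: "cmod (h j x) = cmod (g x) * 2 ^ j / A"
      unfolding h_def using that x assms(2) by (simp add: norm_mult norm_divide norm_power)
    have l: "A / 2 ^ Suc j < cmod (g x)" "cmod (g x) \<le> A / 2 ^ j" using lev[OF that(1) x(1)] x by auto
    have "1/2 = A / 2 ^ Suc j * 2 ^ j / A" using assms(2) by simp
    also have "\<dots> \<le> cmod (h j x)"
      unfolding hx using l assms(2) by (intro divide_right_mono mult_right_mono) auto
    finally have "1/2 \<le> cmod (h j x)" .
    moreover have "cmod (h j x) \<le> A / 2 ^ j * 2 ^ j / A"
      unfolding hx using l assms(2) by (intro divide_right_mono mult_right_mono) auto
    ultimately show ?thesis using l assms(2) by simp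
  qed
  show "g x = (\<Sum>j\<in>lev ` {x\<in>X. g x \<noteq> 0}. of_real (A / 2 ^ j) * h j x)" if "x \<in> X" for x
  proof (cases "g x = 0")
    case False
    have "of_real (A / 2 ^ j) * h j x = (if j = lev x then g x else 0)" for j
    proof -
      have "complex_of_real (A / 2 ^ j) * of_real (2 ^ j / A) = 1" using assms(2)
        by (simp flip: of_real_mult)
      thus ?thesis unfolding h_def using that False assms(2) by (simp add: mult.left_commute)
    qed
    hence "(\<Sum>j\<in>lev ` {x\<in>X. g x \<noteq> 0}. of_real (A / 2 ^ j) * h j x)
        = (\<Sum>j\<in>lev ` {x\<in>X. g x \<noteq> 0}. if j = lev x then g x else 0)" by simp
    also have "\<dots> = g x" using that False assms(1) by (simp add: sum.delta')
    finally show ?thesis by (rule sym)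
  qed (simp add: h_def)
qed

lemma sum_power_le_geometric:
  fixes q :: real
  assumes "0 \<le> q" "q < 1" "finite J"
  shows "(\<Sum>j\<in>J. q ^ j) \<le> 1 / (1 - q)"
proof -
  have "(\<Sum>j\<in>J. q ^ j) \<le> (\<Sum>j. q ^ j)"
    using assms by (intro sum_le_suminf summable_geometric) auto
  thus ?thesis using assms suminf_geometric[of q] by simp
qed

lemma dyadic_weight_eq_geometric:
  "A / 2 ^ j * 2 powr (real (Suc j) * r / r1) = A * 2 powr (r/r1) * (2 powr (r/r1 - 1)) ^ j"
proof -
  have "(2 powr (r/r1 - 1)) ^ j = 2 powr ((r/r1 - 1) * real j)"
    by (simp add: powr_realpow[symmetric] powr_powr)
  also have "\<dots> = 2 powr (real j * r / r1) / 2 ^ j"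
    by (simp add: powr_diff powr_realpow algebra_simps)
  finally show ?thesis
    by (simp add: powr_add[symmetric] add_divide_distrib algebra_simps)
qed

lemma card_dyadic_piece_le:
  assumes "finite (carrier R)" "0 < r" "0 < Lr_norm R r g"
    and "\<And>x. x \<in> cube R \<Longrightarrow> h x \<noteq> 0 \<Longrightarrow> Lr_norm R r g / 2 ^ Suc j < cmod (g x)"
  shows "real (card {x\<in>cube R. h x \<noteq> 0}) \<le> 2 powr (real (Suc j) * r)"
proof -
  define t where "t = Lr_norm R r g / 2 ^ Suc j"
  have t: "0 < t" "Lr_norm R r g / t = 2 ^ Suc j" unfolding t_def using assms(3) by auto
  have "{x\<in>cube R. h x \<noteq> 0} \<subseteq> {x\<in>cube R. t < cmod (g x)}" using assms(4) unfolding t_def by blast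
  hence "real (card {x\<in>cube R. h x \<noteq> 0}) \<le> real (card {x\<in>cube R. t < cmod (g x)})"
    using finite_cube[OF assms(1)] by (simp add: card_mono)
  also have "\<dots> \<le> (Lr_norm R r g / t) powr r" by (rule card_superlevel_le[OF assms(2) t(1) assms(1)])
  also have "\<dots> = 2 powr (real (Suc j) * r)"
    unfolding t(2) by (subst powr_realpow[symmetric]) (simp_all add: powr_powr)
  finally show ?thesis .
qed

lemma L2P_norm_le_of_restricted_type:
  assumes "finite (carrier R)" "0 < r" "r < r1" "0 \<le> C0"
    and restricted: "\<And>h. sim_one R h \<Longrightarrow>
      L2P_norm R e h \<le> C0 * real (card {x\<in>cube R. h x \<noteq> 0}) powr (1/r1)"
  shows "L2P_norm R e g \<le> C0 * 2 powr (r/r1) / (1 - 2 powr (r/r1 - 1)) * Lr_norm R r g"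
proof (cases "Lr_norm R r g = 0")
  case True
  have "L2P_norm R e g = 0"
    using norm_le_Lr_norm[OF assms(2,1), of _ g] True by (intro L2P_norm_eq_0) (metis norm_le_zero_iff)
  thus ?thesis using True by simp
next
  case False
  define A where "A = Lr_norm R r g"
  define q where "q = (2::real) powr (r/r1 - 1)"
  have A: "0 < A" using False Lr_norm_nonneg A_def by (metis less_eq_real_def)
  have q: "0 \<le> q" "q < 1" unfolding q_def using assms by (auto intro!: powr_less_one)
  obtain J h where J: "finite J"
    and h: "\<And>j x. x \<in> cube R \<Longrightarrow> h j x \<noteq> 0 \<Longrightarrow>
              1/2 \<le> cmod (h j x) \<and> cmod (h j x) \<le> 1 \<and> A / 2 ^ Suc j < cmod (g x)"
    and g: "\<And>x. x \<in> cube R \<Longrightarrow> g x = (\<Sum>j\<in>J. of_real (A / 2 ^ j) * h j x)"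
  proof (rule dyadic_decomposition[of "cube R" A g])
    show "finite (cube R)" using assms(1) by (rule finite_cube)
  qed (use A norm_le_Lr_norm[OF assms(2,1)] in \<open>auto simp: A_def\<close>)
  have piece: "A / 2 ^ j * L2P_norm R e (h j) \<le> A * C0 * 2 powr (r/r1) * q ^ j" for j
  proof -
    have "sim_one R (h j)" unfolding sim_one_def using h by fastforce
    have "real (card {x\<in>cube R. h j x \<noteq> 0}) powr (1/r1) \<le> (2 powr (real (Suc j) * r)) powr (1/r1)"
      using card_dyadic_piece_le[OF assms(1,2), of g "h j" j] h A assms(2,3) unfolding A_def
      by (intro powr_mono2) auto
    hence "L2P_norm R e (h j) \<le> C0 * 2 powr (real (Suc j) * r / r1)"
      using restricted[OF \<open>sim_one R (h j)\<close>] assms(4)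
      by (simp add: powr_powr order_trans[OF _ mult_left_mono])
    hence "A / 2 ^ j * L2P_norm R e (h j) \<le> A / 2 ^ j * (C0 * 2 powr (real (Suc j) * r / r1))"
      using A by (intro mult_left_mono) auto
    also have "\<dots> = C0 * (A / 2 ^ j * 2 powr (real (Suc j) * r / r1))" by (rule mult.left_commute)
    also have "\<dots> = A * C0 * 2 powr (r/r1) * q ^ j"
      unfolding dyadic_weight_eq_geometric q_def by (simp only: mult_ac)
    finally show ?thesis .
  qed
  have "L2P_norm R e g = L2P_norm R e (\<lambda>x. \<Sum>j\<in>J. of_real (A / 2 ^ j) * h j x)"
    using g by (rule L2P_norm_cong)
  also have "\<dots> \<le> (\<Sum>j\<in>J. A / 2 ^ j * L2P_norm R e (h j))"
    using L2P_norm_sum_le[OF J, of R e "\<lambda>j. of_real (A / 2 ^ j)" h] A by (simp add: norm_divide norm_power)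
  also have "\<dots> \<le> (\<Sum>j\<in>J. A * C0 * 2 powr (r/r1) * q ^ j)"
    using piece by (rule sum_mono)
  also have "\<dots> = A * C0 * 2 powr (r/r1) * (\<Sum>j\<in>J. q ^ j)"
    by (simp add: sum_distrib_left)
  also have "\<dots> \<le> A * C0 * 2 powr (r/r1) * (1 / (1 - q))"
    using sum_power_le_geometric[OF q J] A assms(4) by (intro mult_left_mono) auto
  finally show ?thesis unfolding A_def q_def by (simp add: mult_ac)
qed

section \<open>Additive characters and Gauss sums\<close>

locale finite_field_add_char = field R for R :: "nat ring" (structure) +
  fixes e :: "nat \<Rightarrow> complex"
  assumes finite_carrier: "finite (carrier R)"
    and two_nonzero: "\<one> \<oplus> \<one> \<noteq> \<zero>"
    and char_add: "\<And>a b. a \<in> carrier R \<Longrightarrow> b \<in> carrier R \<Longrightarrow> e (a \<oplus> b) = e a * e b"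
    and char_zero: "e \<zero> = 1"
    and char_nontrivial: "\<exists>a\<in>carrier R. e a \<noteq> 1"
begin

abbreviation N :: nat where "N \<equiv> card (carrier R)"

lemma N_pos: "0 < N"
  using finite_carrier one_closed card_gt_0_iff by blast

lemma dot3_simp: "dot3 R (x1, x2, x3) (y1, y2, y3) = x1 \<otimes> y1 \<oplus> x2 \<otimes> y2 \<oplus> x3 \<otimes> y3"
  unfolding dot3_def by simp

lemma dot3_closed: "x \<in> cube R \<Longrightarrow> y \<in> cube R \<Longrightarrow> dot3 R x y \<in> carrier R"
  unfolding cube_def dot3_def by (auto split: prod.splits)

lemma parab_subset_cube: "parab R \<subseteq> cube R"
  unfolding parab_def cube_def by auto

lemma sum_parab:
  "(\<Sum>\<xi>\<in>parab R. \<phi> \<xi>) = (\<Sum>u1\<in>carrier R. \<Sum>u2\<in>carrier R. \<phi> (u1, u2, u1 \<otimes> u1 \<oplus> u2 \<otimes> u2))"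
proof -
  have "parab R = (\<lambda>(u1, u2). (u1, u2, u1 \<otimes> u1 \<oplus> u2 \<otimes> u2)) ` (carrier R \<times> carrier R)"
    unfolding parab_def by auto
  moreover have "inj_on (\<lambda>(u1, u2). (u1, u2, u1 \<otimes> u1 \<oplus> u2 \<otimes> u2)) (carrier R \<times> carrier R)"
    by (auto simp: inj_on_def)
  ultimately show ?thesis by (simp add: sum.reindex sum.cartesian_product case_prod_unfold)
qed

lemma card_parab: "card (parab R) = N ^ 2"
  using sum_parab[of "\<lambda>_. 1::nat"] by (simp add: power2_eq_square)

definition diff3 :: "nat \<times> nat \<times> nat \<Rightarrow> nat \<times> nat \<times> nat \<Rightarrow> nat \<times> nat \<times> nat" where
  "diff3 x y = (case x of (x1, x2, x3) \<Rightarrow> case y of (y1, y2, y3) \<Rightarrow> (x1 \<ominus> y1, x2 \<ominus> y2, x3 \<ominus> y3))"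

lemma diff3_closed: "x \<in> cube R \<Longrightarrow> y \<in> cube R \<Longrightarrow> diff3 x y \<in> cube R"
  unfolding diff3_def cube_def by (auto split: prod.splits)

lemma diff3_eq_zero_iff: "x \<in> cube R \<Longrightarrow> y \<in> cube R \<Longrightarrow> diff3 x y = (\<zero>, \<zero>, \<zero>) \<longleftrightarrow> x = y"
  unfolding diff3_def cube_def by (auto split: prod.splits)

lemma bij_betw_add_right: "b \<in> carrier R \<Longrightarrow> bij_betw (\<lambda>x. x \<oplus> b) (carrier R) (carrier R)"
  by (rule bij_betw_byWitness[where f' = "\<lambda>x. x \<ominus> b"]) (auto simp: a_minus_def add.m_assoc r_neg l_neg)

lemma char_neg: "a \<in> carrier R \<Longrightarrow> e a * e (\<ominus> a) = 1"
  using char_add[of a "\<ominus> a"] char_zero by (simp add: r_neg)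

lemma char_nonzero: "a \<in> carrier R \<Longrightarrow> e a \<noteq> 0"
  using char_neg by force

lemma char_pow_card: assumes "a \<in> carrier R" shows "e a ^ N = 1"
proof -
  define P where "P = (\<Prod>x\<in>carrier R. e x)"
  have "P = (\<Prod>x\<in>carrier R. e (x \<oplus> a))"
    unfolding P_def using prod.reindex_bij_betw[OF bij_betw_add_right[OF assms], of e] by simp
  also have "\<dots> = P * e a ^ N"
    unfolding P_def using assms by (simp add: char_add prod.distrib)
  finally have "P * e a ^ N = P * 1" by simp
  moreover have "P \<noteq> 0" unfolding P_def using char_nonzero finite_carrier by auto
  ultimately show ?thesis by simp
qed

lemma norm_char: assumes "a \<in> carrier R" shows "cmod (e a) = 1"
proof -
  have "cmod (e a) ^ N = 1" using char_pow_card[OF assms] by (simp flip: norm_power)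
  thus ?thesis using N_pos power_eq_imp_eq_base[of "cmod (e a)" N 1] by simp
qed

lemma cnj_char: assumes "a \<in> carrier R" shows "cnj (e a) = e (\<ominus> a)"
proof -
  have "e a * cnj (e a) = 1"
    using complex_norm_square[of "e a"] norm_char[OF assms] by simp
  thus ?thesis using char_neg[OF assms] char_nonzero[OF assms] by (metis mult_left_cancel)
qed

lemma sum_char_mult: assumes "c \<in> carrier R"
  shows "(\<Sum>x\<in>carrier R. e (c \<otimes> x)) = (if c = \<zero> then of_nat N else 0)"
proof (cases "c = \<zero>")
  case False
  obtain a where a: "a \<in> carrier R" "e a \<noteq> 1" using char_nontrivial by blast
  have cinv: "inv c \<in> carrier R" "c \<otimes> inv c = \<one>" using assms False field_Units by auto
  define b where "b = inv c \<otimes> a"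
  have b: "b \<in> carrier R" "c \<otimes> b = a"
    using cinv a assms unfolding b_def by (simp_all flip: m_assoc)
  have "(\<Sum>x\<in>carrier R. e (c \<otimes> x)) = (\<Sum>x\<in>carrier R. e (c \<otimes> (x \<oplus> b)))"
    using sum.reindex_bij_betw[OF bij_betw_add_right[OF b(1)], of "\<lambda>x. e (c \<otimes> x)"] by simp
  also have "\<dots> = (\<Sum>x\<in>carrier R. e (c \<otimes> x)) * e a"
    using assms b a(1) by (simp add: r_distr char_add sum_distrib_right cong: sum.cong)
  finally show ?thesis using a(2) False by (simp add: mult_cancel_left2 mult.commute)
qed (simp add: char_zero)

definition gauss_sum :: "nat \<Rightarrow> nat \<Rightarrow> complex" where
  "gauss_sum \<alpha> \<beta> = (\<Sum>u\<in>carrier R. e (\<alpha> \<otimes> u \<otimes> u \<oplus> \<beta> \<otimes> u))"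

lemma gauss_sum_linear:
  assumes "\<beta> \<in> carrier R" "\<beta> \<noteq> \<zero>" shows "gauss_sum \<zero> \<beta> = 0"
  unfolding gauss_sum_def using sum_char_mult[OF assms(1)] assms by (simp cong: sum.cong)

lemma gauss_sum_mult_cnj:
  assumes \<alpha>: "\<alpha> \<in> carrier R" "\<alpha> \<noteq> \<zero>" and \<beta>: "\<beta> \<in> carrier R"
  shows "gauss_sum \<alpha> \<beta> * cnj (gauss_sum \<alpha> \<beta>) = of_nat N"
proof -
  define f where "f u = \<alpha> \<otimes> u \<otimes> u \<oplus> \<beta> \<otimes> u" for u
  define c where "c h = \<alpha> \<otimes> (\<one> \<oplus> \<one>) \<otimes> h" for h
  have f_closed: "f u \<in> carrier R" if "u \<in> carrier R" for u using that \<alpha> \<beta> f_def by simp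
  have c_closed: "c h \<in> carrier R" if "h \<in> carrier R" for h using that \<alpha> c_def by simp
  \<comment> \<open>Substituting \<open>u = h \<oplus> v\<close> makes the phase linear in \<open>v\<close>.\<close>
  have shift: "f (h \<oplus> v) \<oplus> \<ominus> f v = f h \<oplus> c h \<otimes> v" if "h \<in> carrier R" "v \<in> carrier R" for h v
    unfolding f_def c_def using that \<alpha> \<beta> by algebra
  have "gauss_sum \<alpha> \<beta> * cnj (gauss_sum \<alpha> \<beta>) = (\<Sum>v\<in>carrier R. \<Sum>u\<in>carrier R. e (f u) * e (\<ominus> f v))"
    unfolding gauss_sum_def f_def[symmetric]
    by (simp add: sum_product cnj_sum cnj_char f_closed) (rule sum.swap)
  also have "\<dots> = (\<Sum>v\<in>carrier R. \<Sum>h\<in>carrier R. e (f h) * e (c h \<otimes> v))"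
  proof (rule sum.cong[OF refl])
    fix v assume v: "v \<in> carrier R"
    show "(\<Sum>u\<in>carrier R. e (f u) * e (\<ominus> f v)) = (\<Sum>h\<in>carrier R. e (f h) * e (c h \<otimes> v))"
      using sum.reindex_bij_betw[OF bij_betw_add_right[OF v], of "\<lambda>u. e (f u) * e (\<ominus> f v)"] v
      by (simp add: f_closed c_closed shift flip: char_add cong: sum.cong)
  qed
  also have "\<dots> = (\<Sum>h\<in>carrier R. e (f h) * (\<Sum>v\<in>carrier R. e (c h \<otimes> v)))"
    by (subst sum.swap) (simp add: sum_distrib_left)
  also have "\<dots> = (\<Sum>h\<in>carrier R. if h = \<zero> then of_nat N else 0)"
  proof (rule sum.cong[OF refl])
    fix h assume h: "h \<in> carrier R"
    have "c h = \<zero> \<longleftrightarrow> h = \<zero>"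
      using h \<alpha> two_nonzero unfolding c_def by (simp add: integral_iff)
    moreover have "f \<zero> = \<zero>" unfolding f_def using \<alpha> \<beta> by simp
    ultimately show "e (f h) * (\<Sum>v\<in>carrier R. e (c h \<otimes> v)) = (if h = \<zero> then of_nat N else 0)"
      using sum_char_mult[OF c_closed[OF h]] char_zero by auto
  qed
  also have "\<dots> = of_nat N" using finite_carrier by simp
  finally show ?thesis .
qed

lemma norm_gauss_sum_sq:
  assumes "\<alpha> \<in> carrier R" "\<alpha> \<noteq> \<zero>" "\<beta> \<in> carrier R"
  shows "(cmod (gauss_sum \<alpha> \<beta>))\<^sup>2 = real N"
  using gauss_sum_mult_cnj[OF assms] complex_norm_square[of "gauss_sum \<alpha> \<beta>"]
  by (metis of_real_eq_iff of_real_of_nat_eq)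

section \<open>The extension estimate on the paraboloid\<close>

definition parab_char_sum :: "nat \<times> nat \<times> nat \<Rightarrow> complex" where
  "parab_char_sum z = (\<Sum>\<xi>\<in>parab R. e (\<ominus> dot3 R z \<xi>))"

lemma parab_char_sum_eq_gauss_sums:
  assumes "z1 \<in> carrier R" "z2 \<in> carrier R" "z3 \<in> carrier R"
  shows "parab_char_sum (z1, z2, z3) = gauss_sum (\<ominus> z3) (\<ominus> z1) * gauss_sum (\<ominus> z3) (\<ominus> z2)"
proof -
  have "\<ominus> (z1 \<otimes> u1 \<oplus> z2 \<otimes> u2 \<oplus> z3 \<otimes> (u1 \<otimes> u1 \<oplus> u2 \<otimes> u2)) =
      (\<ominus> z3 \<otimes> u1 \<otimes> u1 \<oplus> \<ominus> z1 \<otimes> u1) \<oplus> (\<ominus> z3 \<otimes> u2 \<otimes> u2 \<oplus> \<ominus> z2 \<otimes> u2)"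
    if "u1 \<in> carrier R" "u2 \<in> carrier R" for u1 u2
    using that assms by algebra
  thus ?thesis
    unfolding parab_char_sum_def gauss_sum_def sum_parab dot3_simp sum_product
    using assms by (intro sum.cong refl) (simp add: char_add)
qed

lemma norm_parab_char_sum_le:
  assumes "z \<in> cube R" "z \<noteq> (\<zero>, \<zero>, \<zero>)"
  shows "cmod (parab_char_sum z) \<le> real N"
proof -
  obtain z1 z2 z3 where z: "z = (z1, z2, z3)" "z1 \<in> carrier R" "z2 \<in> carrier R" "z3 \<in> carrier R"
    using assms(1) unfolding cube_def by auto
  show ?thesis
  proof (cases "z3 = \<zero>")
    case False
    hence "\<ominus> z3 \<noteq> \<zero>" using z by simp
    hence "(cmod (parab_char_sum z))\<^sup>2
        = (cmod (gauss_sum (\<ominus> z3) (\<ominus> z1)))\<^sup>2 * (cmod (gauss_sum (\<ominus> z3) (\<ominus> z2)))\<^sup>2"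
      using z by (simp add: parab_char_sum_eq_gauss_sums norm_mult power_mult_distrib)
    also have "\<dots> = real N ^ 2"
      using norm_gauss_sum_sq[OF _ \<open>\<ominus> z3 \<noteq> \<zero>\<close>] z by (simp add: power2_eq_square)
    finally show ?thesis by (simp add: power2_eq_iff_nonneg)
  next
    case True
    hence "z1 \<noteq> \<zero> \<or> z2 \<noteq> \<zero>" using assms z by auto
    thus ?thesis using z True by (auto simp: parab_char_sum_eq_gauss_sums gauss_sum_linear)
  qed
qed

lemma norm_parab_char_sum_le_card:
  assumes "z \<in> cube R" shows "cmod (parab_char_sum z) \<le> real N ^ 2"
proof -
  have "cmod (parab_char_sum z) \<le> (\<Sum>\<xi>\<in>parab R. cmod (e (\<ominus> dot3 R z \<xi>)))"
    unfolding parab_char_sum_def by (rule norm_sum)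
  also have "\<dots> = (\<Sum>\<xi>\<in>parab R. 1)"
    using assms parab_subset_cube by (intro sum.cong) (auto simp: dot3_closed norm_char)
  also have "\<dots> = real N ^ 2" using card_parab by simp
  finally show ?thesis .
qed

lemma char_dot3_mult_cnj:
  assumes "x \<in> cube R" "y \<in> cube R" "\<xi> \<in> cube R"
  shows "e (\<ominus> dot3 R x \<xi>) * cnj (e (\<ominus> dot3 R y \<xi>)) = e (\<ominus> dot3 R (diff3 x y) \<xi>)"
proof -
  obtain x1 x2 x3 y1 y2 y3 z1 z2 z3 where
    xyz: "x = (x1, x2, x3)" "y = (y1, y2, y3)" "\<xi> = (z1, z2, z3)"
    and closed: "x1 \<in> carrier R" "x2 \<in> carrier R" "x3 \<in> carrier R"
      "y1 \<in> carrier R" "y2 \<in> carrier R" "y3 \<in> carrier R"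
      "z1 \<in> carrier R" "z2 \<in> carrier R" "z3 \<in> carrier R"
    using assms unfolding cube_def by auto
  have "\<ominus> (x1 \<otimes> z1 \<oplus> x2 \<otimes> z2 \<oplus> x3 \<otimes> z3) \<oplus> \<ominus> (\<ominus> (y1 \<otimes> z1 \<oplus> y2 \<otimes> z2 \<oplus> y3 \<otimes> z3))
      = \<ominus> ((x1 \<ominus> y1) \<otimes> z1 \<oplus> (x2 \<ominus> y2) \<otimes> z2 \<oplus> (x3 \<ominus> y3) \<otimes> z3)"
    using closed by algebra
  hence "\<ominus> dot3 R x \<xi> \<oplus> \<ominus> (\<ominus> dot3 R y \<xi>) = \<ominus> dot3 R (diff3 x y) \<xi>"
    unfolding xyz diff3_def by (simp add: dot3_simp)
  thus ?thesis using assms by (simp add: cnj_char dot3_closed flip: char_add)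
qed

lemma sum_norm_fourier_sq_eq:
  "complex_of_real (\<Sum>\<xi>\<in>parab R. (cmod (fourier R e g \<xi>))\<^sup>2) =
     (\<Sum>x\<in>cube R. \<Sum>y\<in>cube R. g x * cnj (g y) * parab_char_sum (diff3 x y))"
proof -
  have "complex_of_real (\<Sum>\<xi>\<in>parab R. (cmod (fourier R e g \<xi>))\<^sup>2) =
      (\<Sum>\<xi>\<in>parab R. fourier R e g \<xi> * cnj (fourier R e g \<xi>))"
    unfolding of_real_sum by (intro sum.cong refl complex_norm_square)
  also have "\<dots> = (\<Sum>\<xi>\<in>parab R. \<Sum>x\<in>cube R. \<Sum>y\<in>cube R.
                    g x * cnj (g y) * e (\<ominus> dot3 R (diff3 x y) \<xi>))"
  proof (rule sum.cong[OF refl])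
    fix \<xi> assume "\<xi> \<in> parab R"
    hence \<xi>: "\<xi> \<in> cube R" using parab_subset_cube by auto
    have "fourier R e g \<xi> * cnj (fourier R e g \<xi>) =
        (\<Sum>x\<in>cube R. \<Sum>y\<in>cube R. (g x * e (\<ominus> dot3 R x \<xi>)) * (cnj (g y) * cnj (e (\<ominus> dot3 R y \<xi>))))"
      unfolding fourier_def by (simp add: sum_product cnj_sum)
    also have "\<dots> = (\<Sum>x\<in>cube R. \<Sum>y\<in>cube R. g x * cnj (g y) * e (\<ominus> dot3 R (diff3 x y) \<xi>))"
      using \<xi> by (intro sum.cong refl) (simp add: char_dot3_mult_cnj[symmetric] mult_ac)
    finally show "fourier R e g \<xi> * cnj (fourier R e g \<xi>) = \<dots>" .
  qed
  also have "\<dots> = (\<Sum>x\<in>cube R. \<Sum>y\<in>cube R. g x * cnj (g y) * parab_char_sum (diff3 x y))"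
    unfolding parab_char_sum_def sum_distrib_left
    by (subst sum.swap, rule sum.cong[OF refl], rule sum.swap)
  finally show ?thesis .
qed

lemma norm_parab_char_sum_diff3_le:
  assumes "x \<in> cube R" "y \<in> cube R"
  shows "cmod (parab_char_sum (diff3 x y)) \<le> real N + (if x = y then real N ^ 2 else 0)"
  using norm_parab_char_sum_le[OF diff3_closed[OF assms]]
    norm_parab_char_sum_le_card[OF diff3_closed[OF assms]] diff3_eq_zero_iff[OF assms]
  by auto

lemma sum_norm_fourier_sq_le:
  "(\<Sum>\<xi>\<in>parab R. (cmod (fourier R e g \<xi>))\<^sup>2) \<le>
     real N ^ 2 * (\<Sum>x\<in>cube R. (cmod (g x))\<^sup>2) + real N * (\<Sum>x\<in>cube R. cmod (g x))\<^sup>2"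
proof -
  have "(\<Sum>\<xi>\<in>parab R. (cmod (fourier R e g \<xi>))\<^sup>2)
      = cmod (complex_of_real (\<Sum>\<xi>\<in>parab R. (cmod (fourier R e g \<xi>))\<^sup>2))"
    by (simp only: norm_of_real) (simp add: sum_nonneg)
  also have "\<dots> = cmod (\<Sum>x\<in>cube R. \<Sum>y\<in>cube R. g x * cnj (g y) * parab_char_sum (diff3 x y))"
    by (simp only: sum_norm_fourier_sq_eq)
  also have "\<dots> \<le> (\<Sum>x\<in>cube R. \<Sum>y\<in>cube R.
                   cmod (g x) * cmod (g y) * (real N + (if x = y then real N ^ 2 else 0)))"
    by (intro order_trans[OF norm_sum] sum_mono)
      (auto simp: norm_mult mult_left_mono norm_parab_char_sum_diff3_le)
  also have "\<dots> = (\<Sum>x\<in>cube R. \<Sum>y\<in>cube R. real N * (cmod (g x) * cmod (g y))) +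
      (\<Sum>x\<in>cube R. \<Sum>y\<in>cube R. if x = y then real N ^ 2 * (cmod (g x))\<^sup>2 else 0)"
    unfolding sum.distrib[symmetric]
    by (intro sum.cong refl) (auto simp: algebra_simps power2_eq_square)
  also have "\<dots> = real N * (\<Sum>x\<in>cube R. cmod (g x))\<^sup>2 + real N ^ 2 * (\<Sum>x\<in>cube R. (cmod (g x))\<^sup>2)"
    using finite_cube[OF finite_carrier]
    by (simp add: sum_distrib_left[symmetric] power2_eq_square sum_product)
  finally show ?thesis by simp
qed

lemma L2P_norm_sq_le:
  "(L2P_norm R e g)\<^sup>2 \<le> (\<Sum>x\<in>cube R. (cmod (g x))\<^sup>2) + (\<Sum>x\<in>cube R. cmod (g x))\<^sup>2 / real N"
proof -
  have N: "0 < real N" using N_pos by simp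
  have "(L2P_norm R e g)\<^sup>2 = (\<Sum>\<xi>\<in>parab R. (cmod (fourier R e g \<xi>))\<^sup>2) / real N ^ 2"
    unfolding L2P_norm_def by (simp add: sum_nonneg power_divide)
  also have "\<dots> \<le> (real N ^ 2 * (\<Sum>x\<in>cube R. (cmod (g x))\<^sup>2) + real N * (\<Sum>x\<in>cube R. cmod (g x))\<^sup>2)
                   / real N ^ 2"
    using sum_norm_fourier_sq_le by (rule divide_right_mono) simp
  also have "\<dots> = (\<Sum>x\<in>cube R. (cmod (g x))\<^sup>2) + (\<Sum>x\<in>cube R. cmod (g x))\<^sup>2 / real N"
    using N by (simp add: field_simps power2_eq_square)
  finally show ?thesis .
qed

lemma L2P_norm_le_sqrt_card_support:
  assumes "sim_one R h" "card {x\<in>cube R. h x \<noteq> 0} \<le> N"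
  shows "L2P_norm R e h \<le> 3 * sqrt (real (card {x\<in>cube R. h x \<noteq> 0}))"
proof -
  define M where "M = real (card {x\<in>cube R. h x \<noteq> 0})"
  have M: "0 \<le> M" "M \<le> real N" using assms(2) unfolding M_def by auto
  have sq: "(\<Sum>x\<in>cube R. (cmod (h x))\<^sup>2) \<le> 4 * M"
    using sim_one_sum_powr_le[OF assms(1) finite_carrier, of 2] unfolding M_def by simp
  have "(\<Sum>x\<in>cube R. cmod (h x)) \<le> 2 * M"
    using sim_one_sum_powr_le[OF assms(1) finite_carrier, of 1] unfolding M_def by simp
  hence "(\<Sum>x\<in>cube R. cmod (h x))\<^sup>2 \<le> (2 * M)\<^sup>2"
    by (intro power_mono) (auto simp: sum_nonneg)
  also have "\<dots> \<le> 4 * M * real N" using M by (simp add: power2_eq_square mult_left_mono)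
  finally have "(\<Sum>x\<in>cube R. cmod (h x))\<^sup>2 / real N \<le> 4 * M"
    using N_pos by (simp add: divide_le_eq)
  hence "(L2P_norm R e h)\<^sup>2 \<le> (3 * sqrt M)\<^sup>2"
    using L2P_norm_sq_le[of h] sq M by (simp add: power_mult_distrib)
  thus ?thesis unfolding M_def by (rule power2_le_imp_le) simp
qed

lemma restricted_type_bound:
  assumes r1: "0 < r1" "r1 \<le> 2" "r1 < r0" and h: "sim_one R h"
    and bound: "L2P_norm R e h \<le> c * real N powr (1/r1 - 1/r0) * Lr_norm R r0 h"
  shows "L2P_norm R e h \<le> max 3 (2 * \<bar>c\<bar>) * real (card {x\<in>cube R. h x \<noteq> 0}) powr (1/r1)"
proof -
  define M where "M = real (card {x\<in>cube R. h x \<noteq> 0})"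
  show ?thesis
  proof (cases "M \<le> real N")
    case True
    have sqrt_le: "sqrt M \<le> M powr (1/r1)"
    proof (cases "M = 0")
      case False
      hence "1 \<le> M" unfolding M_def by simp
      thus ?thesis using r1 by (simp add: powr_half_sqrt[symmetric] powr_mono)
    qed simp
    have "L2P_norm R e h \<le> 3 * sqrt M"
      using L2P_norm_le_sqrt_card_support[OF h] True unfolding M_def by simp
    also have "\<dots> \<le> 3 * M powr (1/r1)" using sqrt_le by simp
    also have "\<dots> \<le> max 3 (2 * \<bar>c\<bar>) * M powr (1/r1)" by (simp add: mult_right_mono)
    finally show ?thesis unfolding M_def .
  next
    case False
    \<comment> \<open>On large supports the loss \<open>N\<^sup>\<epsilon>\<close> of the hypothesis is absorbed into \<open>M\<^sup>\<epsilon>\<close>.\<close>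
    have "L2P_norm R e h \<le> \<bar>c\<bar> * real N powr (1/r1 - 1/r0) * Lr_norm R r0 h"
      using bound by (rule order_trans) (simp add: Lr_norm_nonneg mult_right_mono)
    also have "\<dots> \<le> \<bar>c\<bar> * M powr (1/r1 - 1/r0) * (2 * M powr (1/r0))"
    proof (intro mult_mono mult_left_mono powr_mono2)
      show "0 \<le> 1/r1 - 1/r0" using r1 by (simp add: frac_le)
      show "Lr_norm R r0 h \<le> 2 * M powr (1/r0)"
        using Lr_norm_sim_one_le[OF h finite_carrier] r1 unfolding M_def by simp
    qed (use False in \<open>simp_all add: Lr_norm_nonneg\<close>)
    also have "\<dots> = 2 * \<bar>c\<bar> * M powr (1/r1)" by (simp add: powr_add[symmetric])
    also have "\<dots> \<le> max 3 (2 * \<bar>c\<bar>) * M powr (1/r1)" by (simp add: mult_right_mono)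
    finally show ?thesis unfolding M_def .
  qed
qed

lemma L2P_norm_indicator_ge: "real N ^ 2 \<le> L2P_norm R e (indicator (cube R))"
proof -
  have zero: "(\<zero>, \<zero>, \<zero>) \<in> parab R" unfolding parab_def by force
  have "fourier R e (indicator (cube R)) (\<zero>, \<zero>, \<zero>) = (\<Sum>x\<in>cube R. 1)"
    unfolding fourier_def by (intro sum.cong) (auto simp: dot3_def cube_def char_zero)
  hence "fourier R e (indicator (cube R)) (\<zero>, \<zero>, \<zero>) = of_nat (N ^ 3)"
    by (simp add: card_cube)
  hence "(real N ^ 3)\<^sup>2 \<le> (\<Sum>\<xi>\<in>parab R. (cmod (fourier R e (indicator (cube R)) \<xi>))\<^sup>2)"
    using zero finite_subset[OF parab_subset_cube finite_cube[OF finite_carrier]]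
    by (intro member_le_sum[of "(\<zero>, \<zero>, \<zero>)", THEN order_trans[rotated]]) (simp_all flip: of_nat_power)
  hence "(real N ^ 3)\<^sup>2 / (real N)\<^sup>2 \<le> (L2P_norm R e (indicator (cube R)))\<^sup>2"
    unfolding L2P_norm_def by (simp add: sum_nonneg divide_right_mono)
  moreover have "(real N ^ 3)\<^sup>2 / (real N)\<^sup>2 = (real N ^ 2)\<^sup>2"
    using N_pos by (simp add: power2_eq_square power3_eq_cube)
  ultimately have "(real N ^ 2)\<^sup>2 \<le> (L2P_norm R e (indicator (cube R)))\<^sup>2" by simp
  thus ?thesis by (rule power2_le_imp_le) (rule L2P_norm_nonneg)
qed

lemma card_carrier_le_of_indicator_bound:
  assumes r0: "0 < r0" "\<delta> + 3/r0 < 2"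
    and bound: "L2P_norm R e (indicator (cube R))
                  \<le> c * real N powr \<delta> * Lr_norm R r0 (indicator (cube R))"
  shows "real N \<le> c powr (1 / (2 - \<delta> - 3/r0))"
proof -
  define \<kappa> where "\<kappa> = 2 - \<delta> - 3/r0"
  have \<kappa>: "0 < \<kappa>" unfolding \<kappa>_def using r0 by simp
  have N: "1 \<le> real N" using N_pos by simp
  have "real N powr \<kappa> * real N powr (\<delta> + 3/r0) = real N ^ 2"
    unfolding \<kappa>_def using N by (simp flip: powr_add)
  also have "\<dots> \<le> c * real N powr (\<delta> + 3/r0)"
    using L2P_norm_indicator_ge bound r0(1) by (simp add: Lr_norm_indicator powr_add mult.assoc)
  finally have "real N powr \<kappa> \<le> c" using N by simp
  hence "(real N powr \<kappa>) powr (1/\<kappa>) \<le> c powr (1/\<kappa>)" using \<kappa> by (intro powr_mono2) auto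
  thus ?thesis using \<kappa> unfolding \<kappa>_def by (simp add: powr_powr)
qed

lemma L2P_norm_le_card_Lr_norm:
  assumes "0 < r"
  shows "L2P_norm R e g \<le> 2 * real N ^ 3 * Lr_norm R r g"
proof -
  define s where "s = (\<Sum>x\<in>cube R. cmod (g x))"
  have "(\<Sum>x\<in>cube R. (cmod (g x))\<^sup>2) \<le> (\<Sum>x\<in>cube R. cmod (g x) * s)"
    unfolding s_def power2_eq_square using finite_cube[OF finite_carrier]
    by (intro sum_mono mult_left_mono member_le_sum) auto
  also have "\<dots> = s\<^sup>2" unfolding s_def by (simp add: sum_distrib_right power2_eq_square)
  finally have "(L2P_norm R e g)\<^sup>2 \<le> s\<^sup>2 + s\<^sup>2 / real N"
    using L2P_norm_sq_le[of g] unfolding s_def by simp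
  also have "\<dots> \<le> (2 * s)\<^sup>2"
  proof -
    have "s\<^sup>2 / real N \<le> s\<^sup>2"
      using N_pos by (simp add: divide_le_eq) (simp add: mult_le_cancel_left1)
    moreover have "(2 * s)\<^sup>2 = 4 * s\<^sup>2" by (simp add: power_mult_distrib)
    ultimately show ?thesis using zero_le_power2[of s] by linarith
  qed
  finally have "L2P_norm R e g \<le> 2 * s"
    by (rule power2_le_imp_le) (simp add: s_def sum_nonneg)
  also have "s \<le> (\<Sum>x\<in>cube R. Lr_norm R r g)"
    unfolding s_def using norm_le_Lr_norm[OF assms finite_carrier] by (intro sum_mono)
  also have "\<dots> = real N ^ 3 * Lr_norm R r g" by (simp add: card_cube)
  finally show ?thesis by simp
qed

end

lemma L2P_norm_le_via_finite_field_add_char: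
  assumes F: "odd_char_field_no_sqrt_m1 R" and e: "nontriv_add_char R e" and "0 \<le> C"
    and bound: "finite_field_add_char R e \<Longrightarrow> L2P_norm R e g \<le> C * Lr_norm R r g"
  shows "L2P_norm R e g \<le> C * Lr_norm R r g"
proof -
  interpret field R using F unfolding odd_char_field_no_sqrt_m1_def by simp
  have hom: "\<And>a b. a \<in> carrier R \<Longrightarrow> b \<in> carrier R \<Longrightarrow> e (a \<oplus>\<^bsub>R\<^esub> b) = e a * e b"
    using e unfolding nontriv_add_char_def by blast
  have "e \<zero>\<^bsub>R\<^esub> = e \<zero>\<^bsub>R\<^esub> * e \<zero>\<^bsub>R\<^esub>" using hom[of "\<zero>\<^bsub>R\<^esub>" "\<zero>\<^bsub>R\<^esub>"] by simp
  hence "e \<zero>\<^bsub>R\<^esub> = 1 \<or> e \<zero>\<^bsub>R\<^esub> = 0" by auto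
  thus ?thesis
  proof
    assume "e \<zero>\<^bsub>R\<^esub> = 1"
    hence "finite_field_add_char R e"
      using F e unfolding odd_char_field_no_sqrt_m1_def nontriv_add_char_def by unfold_locales auto
    thus ?thesis by (rule bound)
  next
    \<comment> \<open>\<open>nontriv_add_char\<close> does not exclude \<open>e = 0\<close> on the field, where every transform vanishes.\<close>
    assume "e \<zero>\<^bsub>R\<^esub> = 0"
    hence "e a = 0" if "a \<in> carrier R" for a using hom[OF that zero_closed] that by simp
    hence "fourier R e g \<xi> = 0" if "\<xi> \<in> parab R" for \<xi>
      using that unfolding fourier_def parab_def cube_def dot3_def
      by (intro sum.neutral) (auto split: prod.splits)
    hence "L2P_norm R e g = 0" unfolding L2P_norm_def by simp
    thus ?thesis using \<open>0 \<le> C\<close> by (simp add: Lr_norm_nonneg)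
  qed
qed

lemma strong_type_bound_via_bounded_field_size:
  assumes "0 < r0" "0 < r" "\<delta> + 3/r0 < 2"
    and char: "\<And>R. odd_char_field_no_sqrt_m1 R \<Longrightarrow> nontriv_add_char R (E R)"
    and hyp: "\<forall>R. odd_char_field_no_sqrt_m1 R \<longrightarrow> (\<forall>g. sim_one R g \<longrightarrow>
               L2P_norm R (E R) g \<le> c * real (card (carrier R)) powr \<delta> * Lr_norm R r0 g)"
  shows "\<exists>C. \<forall>R. odd_char_field_no_sqrt_m1 R \<longrightarrow> (\<forall>g. L2P_norm R (E R) g \<le> C * Lr_norm R r g)"
proof -
  define K where "K = c powr (1 / (2 - \<delta> - 3/r0))"
  have "L2P_norm R (E R) g \<le> 2 * K ^ 3 * Lr_norm R r g" if F: "odd_char_field_no_sqrt_m1 R" for R g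
  proof (rule L2P_norm_le_via_finite_field_add_char[OF F char[OF F]])
    show "0 \<le> 2 * K ^ 3" by (simp add: K_def)
    assume "finite_field_add_char R (E R)"
    then interpret finite_field_add_char R "E R" .
    have "real N \<le> K"
      unfolding K_def using hyp F sim_one_indicator
      by (intro card_carrier_le_of_indicator_bound assms(1,3)) blast
    hence "2 * real N ^ 3 * Lr_norm R r g \<le> 2 * K ^ 3 * Lr_norm R r g"
      by (intro mult_right_mono mult_left_mono power_mono) (auto simp: Lr_norm_nonneg)
    thus "L2P_norm R (E R) g \<le> 2 * K ^ 3 * Lr_norm R r g"
      using L2P_norm_le_card_Lr_norm[OF assms(2)] by (rule order_trans[rotated])
  qed
  thus ?thesis by blast
qed

lemma strong_type_bound_via_restricted_type:
  assumes r: "0 < r" "r < r1" "r1 \<le> 2" "r1 < r0"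
    and char: "\<And>R. odd_char_field_no_sqrt_m1 R \<Longrightarrow> nontriv_add_char R (E R)"
    and hyp: "\<forall>R. odd_char_field_no_sqrt_m1 R \<longrightarrow> (\<forall>g. sim_one R g \<longrightarrow>
        L2P_norm R (E R) g \<le> c * real (card (carrier R)) powr (1/r1 - 1/r0) * Lr_norm R r0 g)"
  shows "\<exists>C. \<forall>R. odd_char_field_no_sqrt_m1 R \<longrightarrow> (\<forall>g. L2P_norm R (E R) g \<le> C * Lr_norm R r g)"
proof -
  define C0 where "C0 = max 3 (2 * \<bar>c\<bar>)"
  define C where "C = C0 * 2 powr (r/r1) / (1 - 2 powr (r/r1 - 1))"
  have "2 powr (r/r1 - 1) < 1" using r by (auto intro!: powr_less_one)
  hence "0 \<le> C" unfolding C_def C0_def by simp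
  have "L2P_norm R (E R) g \<le> C * Lr_norm R r g" if F: "odd_char_field_no_sqrt_m1 R" for R g
  proof (rule L2P_norm_le_via_finite_field_add_char[OF F char[OF F] \<open>0 \<le> C\<close>])
    assume "finite_field_add_char R (E R)"
    then interpret finite_field_add_char R "E R" .
    show "L2P_norm R (E R) g \<le> C * Lr_norm R r g"
      unfolding C_def
    proof (rule L2P_norm_le_of_restricted_type[OF finite_carrier r(1,2)])
      show "0 \<le> C0" by (simp add: C0_def)
      show "L2P_norm R (E R) h \<le> C0 * real (card {x\<in>cube R. h x \<noteq> 0}) powr (1/r1)"
        if "sim_one R h" for h
        unfolding C0_def using r hyp F that by (intro restricted_type_bound) auto
    qed
  qed
  thus ?thesis by blast
qed

theorem lemma2p2:
  fixes r0 :: real and E :: "nat ring \<Rightarrow> nat \<Rightarrow> complex"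
  assumes "r0 \<ge> 1"
    and "\<And>R. odd_char_field_no_sqrt_m1 R \<Longrightarrow> nontriv_add_char R (E R)"
    and "\<forall>\<epsilon>>0. \<exists>c. \<forall>R. odd_char_field_no_sqrt_m1 R \<longrightarrow>
           (\<forall>g. sim_one R g \<longrightarrow>
              L2P_norm R (E R) g \<le> c * real (card (carrier R)) powr \<epsilon> * Lr_norm R r0 g)"
  shows "\<forall>r. 1 \<le> r \<and> r < r0 \<longrightarrow> (\<exists>C. \<forall>R. odd_char_field_no_sqrt_m1 R \<longrightarrow>
           (\<forall>g. L2P_norm R (E R) g \<le> C * Lr_norm R r g))"
proof (intro allI impI)
  fix r assume r: "1 \<le> r \<and> r < r0"
  show "\<exists>C. \<forall>R. odd_char_field_no_sqrt_m1 R \<longrightarrow> (\<forall>g. L2P_norm R (E R) g \<le> C * Lr_norm R r g)"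
  proof (cases "3/2 < r0")
    case True
    define \<delta> where "\<delta> = 1 - 3 / (2 * r0)"
    have "0 < \<delta>" "\<delta> + 3/r0 < 2" using True unfolding \<delta>_def by (simp_all add: field_simps)
    then obtain c where "\<forall>R. odd_char_field_no_sqrt_m1 R \<longrightarrow> (\<forall>g. sim_one R g \<longrightarrow>
        L2P_norm R (E R) g \<le> c * real (card (carrier R)) powr \<delta> * Lr_norm R r0 g)"
      using assms(3) by blast
    from strong_type_bound_via_bounded_field_size[OF _ _ \<open>\<delta> + 3/r0 < 2\<close> assms(2) this]
    show ?thesis using r True by simp
  next
    case False
    define r1 where "r1 = (r + r0) / 2"
    have r1: "0 < r" "r < r1" "r1 \<le> 2" "r1 < r0" using r False unfolding r1_def by auto
    hence "0 < 1/r1 - 1/r0" by (simp add: frac_less2)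
    then obtain c where "\<forall>R. odd_char_field_no_sqrt_m1 R \<longrightarrow> (\<forall>g. sim_one R g \<longrightarrow>
        L2P_norm R (E R) g \<le> c * real (card (carrier R)) powr (1/r1 - 1/r0) * Lr_norm R r0 g)"
      using assms(3) by blast
    thus ?thesis using strong_type_bound_via_restricted_type[OF r1 assms(2)] by blast
  qed
qed

end
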